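(* Let $N \geq 1$ and $A \geq 0$ be integers, and suppose $A$ items are drawn uniformly at random with replacement from a sample of $N$ items (each draw independent and each item equally likely). Let $k$ be the number of distinct original items appearing among the $A$ draws, so that $$\mathbb{P}(k) = \frac{N^{\underline{k}}}{N^{A}} \left\{ {A \atop k} \right\}, \qquad k = 0,1,\dots,N.$$ Then for every integer $t \geq 0$, the $t$-th raw moment $\mu'_t = \mathbb{E}[k^t]$ satisfies $$\mu'_t = \sum_{k=0}^{N} k^t \frac{N^{\underline{k}}}{N^{A}} \left\{ {A \atop k} \right\} = \sum_{\substack{u,v,w \in \mathbb{N}_0 \\ u+v+w = t}} \binom{t}{u} (-1)^{v} \left\{ {v+w \atop v} \right\} N^{\underline{v}} (N-v)^{u} \Big(1 - \frac{v}{N}\Big)^{A}.$$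
   Context: $\mathbb{N}_0$ denotes the nonnegative integers. $N^{\underline{k}}$ is the falling factorial: $N^{\underline{k}} = N!/(N-k)!$ if $k \leq N$ and $0$ otherwise. $\left\{ {n \atop m} \right\}$ is the Stirling number of the second kind (the number of partitions of an $n$-element set into $m$ nonempty blocks), with $\left\{ {0 \atop 0} \right\} = 1$, $\left\{ {n \atop 0} \right\} = 0$ for $n > 0$, and $\left\{ {n \atop m} \right\} = 0$ for $m < 0$ or $m > n$. The convention $0^0 = 1$ is used. *)

theory Defs
  imports "HOL-Probability.Probability" "HOL-Combinatorics.Stirling"
begin

definition falling_fact :: "nat \<Rightarrow> nat \<Rightarrow> nat" where
  "falling_fact N k = (if k \<le> N then fact N div fact (N - k) else 0)"

text \<open>Sampling model: A draws with replacement from N items = a uniformly random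
  function from the draw indices {..<A} to the items {..<N}.\<close>
definition draws_pmf :: "nat \<Rightarrow> nat \<Rightarrow> (nat \<Rightarrow> nat) pmf" where
  "draws_pmf N A = pmf_of_set (PiE {..<A} (\<lambda>_. {..<N}))"

definition distinct_count :: "nat \<Rightarrow> (nat \<Rightarrow> nat) \<Rightarrow> nat" where
  "distinct_count A f = card (f ` {..<A})"

end

theory Submission
  imports Defs
begin

(* Appending one draw to a sequence showing k or k - 1 distinct items shows that the number of
   sequences with exactly k distinct items obeys the recursion of N^(k) S(A,k), writing N^(k)
   for the falling factorial. For the moments, expand
   k^t = (N - (N - k))^t in falling factorials of N - k:
     k^t = sum_v (-1)^v (N-k)^(v) D_{t,v}(N-v),   D_{t,v}(z) = sum_s C(t,s) S(s,v) z^(t-s).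
   Against the distribution of k, the factor (N-k)^(v) N^(k) equals N^(v) (N-v)^(k), and
   sum_k S(A,k) (N-v)^(k) = (N-v)^A. Putting s = v + w and u = t - s gives the triple sum. *)

definition falling_factorial :: "'a::comm_ring_1 \<Rightarrow> nat \<Rightarrow> 'a" where
  "falling_factorial x n = (\<Prod>i<n. x - of_nat i)"

lemma falling_factorial_0 [simp]: "falling_factorial x 0 = 1"
  by (simp add: falling_factorial_def)

lemma falling_factorial_Suc: "falling_factorial x (Suc n) = falling_factorial x n * (x - of_nat n)"
  by (simp add: falling_factorial_def)

lemma falling_factorial_Suc_left: "falling_factorial x (Suc n) = x * falling_factorial (x - 1) n"
  unfolding falling_factorial_def
  by (subst prod.lessThan_Suc_shift) (simp add: algebra_simps)

lemma falling_factorial_add: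
  "falling_factorial x (m + n) = falling_factorial x m * falling_factorial (x - of_nat m) n"
proof (induction m arbitrary: x)
  case (Suc m)
  show ?case using Suc[of "x - 1"] by (simp add: falling_factorial_Suc_left algebra_simps)
qed simp

lemma falling_factorial_of_nat_eq_0: "N < n \<Longrightarrow> falling_factorial (of_nat N) n = 0"
  unfolding falling_factorial_def by (rule prod_zero) auto

lemma falling_fact_mult_fact: "n \<le> N \<Longrightarrow> falling_fact N n * fact (N - n) = fact N"
  by (simp add: falling_fact_def fact_dvd)

lemma falling_fact_Suc: "falling_fact N (Suc n) = falling_fact N n * (N - n)"
proof (cases "Suc n \<le> N")
  case True
  then have "N - n = Suc (N - Suc n)"
    by simp
  then have "fact (N - n) = (N - n) * (fact (N - Suc n) :: nat)"
    by (simp only: fact_Suc) simp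
  then have "falling_fact N (Suc n) * fact (N - Suc n) = falling_fact N n * (N - n) * fact (N - Suc n)"
    using True falling_fact_mult_fact[of "Suc n" N] falling_fact_mult_fact[of n N] by simp
  then show ?thesis by simp
next
  case False
  then show ?thesis by (cases "n = N") (auto simp: falling_fact_def)
qed

lemma of_nat_falling_fact: "of_nat (falling_fact N n) = falling_factorial (of_nat N) n"
proof (induction n)
  case (Suc n)
  show ?case
  proof (cases "n \<le> N")
    case True
    then show ?thesis using Suc by (simp add: falling_fact_Suc falling_factorial_Suc of_nat_diff)
  next
    case False
    then show ?thesis
      using falling_factorial_of_nat_eq_0[of N "Suc n"] by (simp add: falling_fact_def)
  qed
qed (simp add: falling_fact_def)

lemma Stirling_Suc_left:
  "Stirling (Suc n) k = k * Stirling n k + (if k = 0 then 0 else Stirling n (k - 1))"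
  by (cases k) auto

lemma power_eq_sum_Stirling_falling_factorial:
  "x ^ n = (\<Sum>k\<le>n. of_nat (Stirling n k) * falling_factorial x k)"
proof (induction n)
  case (Suc n)
  have "x ^ Suc n = (\<Sum>k\<le>n. of_nat (Stirling n k) * (x * falling_factorial x k))"
    using Suc.IH by (simp add: sum_distrib_left algebra_simps)
  also have "\<dots> = (\<Sum>k\<le>n. of_nat (Stirling n k) * falling_factorial x (Suc k))
      + (\<Sum>k\<le>n. of_nat k * of_nat (Stirling n k) * falling_factorial x k)"
    by (simp add: falling_factorial_Suc sum.distrib[symmetric] algebra_simps)
  also have "(\<Sum>k\<le>n. of_nat (Stirling n k) * falling_factorial x (Suc k))
      = (\<Sum>k\<le>Suc n. (if k = 0 then 0 else of_nat (Stirling n (k - 1))) * falling_factorial x k)"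
    by (subst sum.atMost_Suc_shift) simp
  also have "(\<Sum>k\<le>n. of_nat k * of_nat (Stirling n k) * falling_factorial x k)
      = (\<Sum>k\<le>Suc n. of_nat k * of_nat (Stirling n k) * falling_factorial x k)"
    by simp
  also have "(\<Sum>k\<le>Suc n. (if k = 0 then 0 else of_nat (Stirling n (k - 1))) * falling_factorial x k) + \<dots>
      = (\<Sum>k\<le>Suc n. of_nat (Stirling (Suc n) k) * falling_factorial x k)"
    by (subst sum.distrib[symmetric], rule sum.cong) (auto simp: Stirling_Suc_left algebra_simps)
  finally show ?case .
qed simp

definition Stirling_binomial_poly :: "nat \<Rightarrow> nat \<Rightarrow> 'a::comm_ring_1 \<Rightarrow> 'a" where
  "Stirling_binomial_poly t v z = (\<Sum>s\<le>t. of_nat (t choose s) * of_nat (Stirling s v) * z ^ (t - s))"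

lemma Stirling_binomial_poly_0: "Stirling_binomial_poly 0 v z = (if v = 0 then 1 else 0)"
  by (cases v) (simp_all add: Stirling_binomial_poly_def)

lemma Stirling_binomial_poly_eq_0: "t < v \<Longrightarrow> Stirling_binomial_poly t v z = 0"
  unfolding Stirling_binomial_poly_def by (rule sum.neutral) auto

lemma Stirling_binomial_poly_Suc:
  "Stirling_binomial_poly (Suc t) v z = (z + of_nat v) * Stirling_binomial_poly t v z
     + (if v = 0 then 0 else Stirling_binomial_poly t (v - 1) z)"
proof -
  let ?D = "Stirling_binomial_poly"
  have "?D (Suc t) v z = (of_nat (Stirling 0 v) * z ^ Suc t
      + (\<Sum>s\<le>t. of_nat (t choose Suc s) * of_nat (Stirling (Suc s) v) * z ^ (t - s)))
      + (\<Sum>s\<le>t. of_nat (t choose s) * of_nat (Stirling (Suc s) v) * z ^ (t - s))"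
    unfolding Stirling_binomial_poly_def
    by (subst sum.atMost_Suc_shift) (simp add: sum.distrib algebra_simps)
  also have "of_nat (Stirling 0 v) * z ^ Suc t
      + (\<Sum>s\<le>t. of_nat (t choose Suc s) * of_nat (Stirling (Suc s) v) * z ^ (t - s))
      = (\<Sum>s\<le>Suc t. of_nat (t choose s) * of_nat (Stirling s v) * z ^ (Suc t - s))"
    by (subst sum.atMost_Suc_shift[where n = t]) simp
  also have "\<dots> = (\<Sum>s\<le>t. of_nat (t choose s) * of_nat (Stirling s v) * z ^ (Suc t - s))"
    by (simp add: binomial_eq_0)
  also have "\<dots> = z * ?D t v z"
    unfolding Stirling_binomial_poly_def sum_distrib_left
    by (rule sum.cong) (auto simp: Suc_diff_le algebra_simps)
  also have "(\<Sum>s\<le>t. of_nat (t choose s) * of_nat (Stirling (Suc s) v) * z ^ (t - s))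
      = of_nat v * ?D t v z + (if v = 0 then 0 else ?D t (v - 1) z)"
    unfolding Stirling_binomial_poly_def Stirling_Suc_left sum_distrib_left
    by (auto simp: sum.distrib algebra_simps)
  finally show ?thesis by (simp add: algebra_simps)
qed

lemma power_diff_eq_sum_falling_factorial:
  "(y - m) ^ t = (\<Sum>v\<le>t. (-1) ^ v * falling_factorial m v * Stirling_binomial_poly t v (y - of_nat v))"
proof (induction t arbitrary: y m)
  case (Suc t)
  let ?D = "Stirling_binomial_poly"
  have "(\<Sum>v\<le>Suc t. (-1) ^ v * falling_factorial m v * ?D (Suc t) v (y - of_nat v))
     = (\<Sum>v\<le>Suc t. (-1) ^ v * falling_factorial m v * (y * ?D t v (y - of_nat v)))
     + (\<Sum>v\<le>Suc t. (-1) ^ v * falling_factorial m v *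
          (if v = 0 then 0 else ?D t (v - 1) (y - of_nat v)))"
    by (simp add: Stirling_binomial_poly_Suc sum.distrib[symmetric] algebra_simps)
  also have "(\<Sum>v\<le>Suc t. (-1) ^ v * falling_factorial m v * (y * ?D t v (y - of_nat v)))
      = y * (\<Sum>v\<le>t. (-1) ^ v * falling_factorial m v * ?D t v (y - of_nat v))"
    by (simp add: Stirling_binomial_poly_eq_0 sum_distrib_left algebra_simps)
  also have "(\<Sum>v\<le>Suc t. (-1) ^ v * falling_factorial m v *
          (if v = 0 then 0 else ?D t (v - 1) (y - of_nat v)))
      = - m * (\<Sum>v\<le>t. (-1) ^ v * falling_factorial (m - 1) v * ?D t v ((y - 1) - of_nat v))"
    by (subst sum.atMost_Suc_shift)
      (simp add: falling_factorial_Suc_left sum_distrib_left algebra_simps)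
  finally show ?case
    using Suc.IH[of y m] Suc.IH[of "y - 1" "m - 1"] by (simp add: algebra_simps)
qed (simp add: Stirling_binomial_poly_0)

lemma sum_falling_factorial_Stirling:
  "(\<Sum>k\<le>N. falling_factorial (of_nat N - of_nat k) v * falling_factorial (of_nat N) k
       * of_nat (Stirling A k))
   = falling_factorial (of_nat N) v * (of_nat N - of_nat v :: 'a::comm_ring_1) ^ A"
proof -
  let ?ff = "falling_factorial :: 'a \<Rightarrow> nat \<Rightarrow> 'a"
  have shift: "?ff (of_nat N - of_nat k) v * ?ff (of_nat N) k = ?ff (of_nat N) v * ?ff (of_nat N - of_nat v) k"
    for k
    using falling_factorial_add[of "of_nat N :: 'a" k v] falling_factorial_add[of "of_nat N :: 'a" v k]
    by (simp add: add.commute mult.commute)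
  have "(\<Sum>k\<le>N. ?ff (of_nat N - of_nat k) v * ?ff (of_nat N) k * of_nat (Stirling A k))
      = (\<Sum>k\<le>N + A. ?ff (of_nat N - of_nat k) v * ?ff (of_nat N) k * of_nat (Stirling A k))"
    by (rule sum.mono_neutral_left) (auto simp: falling_factorial_of_nat_eq_0)
  also have "\<dots> = (\<Sum>k\<le>N + A. ?ff (of_nat N) v * (?ff (of_nat N - of_nat v) k * of_nat (Stirling A k)))"
    by (simp add: shift mult.assoc)
  also have "\<dots> = ?ff (of_nat N) v * (\<Sum>k\<le>A. of_nat (Stirling A k) * ?ff (of_nat N - of_nat v) k)"
    by (subst sum.mono_neutral_right[of "{..N + A}" "{..A}"]) (auto simp: sum_distrib_left mult.commute)
  finally show ?thesis
    by (simp flip: power_eq_sum_Stirling_falling_factorial)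
qed

lemma sum_power_falling_factorial_Stirling:
  "(\<Sum>k\<le>N. of_nat k ^ t * falling_factorial (of_nat N) k * of_nat (Stirling A k))
   = (\<Sum>v\<le>t. (-1) ^ v * falling_factorial (of_nat N) v * (of_nat N - of_nat v) ^ A
        * Stirling_binomial_poly t v (of_nat N - of_nat v :: 'a::comm_ring_1))"
proof -
  have "(\<Sum>k\<le>N. of_nat k ^ t * falling_factorial (of_nat N :: 'a) k * of_nat (Stirling A k))
      = (\<Sum>k\<le>N. \<Sum>v\<le>t. (-1) ^ v * Stirling_binomial_poly t v (of_nat N - of_nat v)
          * (falling_factorial (of_nat N - of_nat k) v * falling_factorial (of_nat N) k
             * of_nat (Stirling A k)))"
    using power_diff_eq_sum_falling_factorial[of "of_nat N :: 'a" "of_nat N - of_nat k" t for k]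
    by (simp add: sum_distrib_left ac_simps)
  also have "\<dots> = (\<Sum>v\<le>t. (-1) ^ v * Stirling_binomial_poly t v (of_nat N - of_nat v)
          * (\<Sum>k\<le>N. falling_factorial (of_nat N - of_nat k) v * falling_factorial (of_nat N) k
             * of_nat (Stirling A k)))"
    by (subst sum.swap) (simp add: sum_distrib_left)
  finally show ?thesis
    unfolding sum_falling_factorial_Stirling by (simp add: ac_simps)
qed

lemma sum_triples_sum_eq:
  fixes t :: nat and g :: "nat \<Rightarrow> nat \<Rightarrow> nat \<Rightarrow> 'a::comm_monoid_add"
  shows "(\<Sum>(u, v, w) \<in> {(u, v, w). u + v + w = t}. g u v w)
   = (\<Sum>v\<le>t. \<Sum>s\<in>{v..t}. g (t - s) v (s - v))"
proof -
  have "(\<Sum>(u, v, w) \<in> {(u, v, w). u + v + w = t}. g u v w)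
      = (\<Sum>(v, s) \<in> (SIGMA v:{..t}. {v..t}). g (t - s) v (s - v))"
    by (rule sum.reindex_bij_witness[where i = "\<lambda>(v, s). (t - s, v, s - v)"
          and j = "\<lambda>(u, v, w). (v, v + w)"]) auto
  also have "\<dots> = (\<Sum>v\<le>t. \<Sum>s\<in>{v..t}. g (t - s) v (s - v))"
    by (rule sum.Sigma[symmetric]) auto
  finally show ?thesis .
qed

lemma sum_Stirling_moment_eq:
  fixes N A t :: nat
  assumes "N \<ge> 1"
  shows "(\<Sum>k = 0..N. real k ^ t * (real (falling_fact N k) / real N ^ A) * real (Stirling A k))
        = (\<Sum>(u, v, w) \<in> {(u, v, w). u + v + w = t}.
             real (t choose u) * (-1) ^ v * real (Stirling (v + w) v) * real (falling_fact N v)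
             * (real N - real v) ^ u * (1 - real v / real N) ^ A)"
proof -
  define G where "G v s = real (t choose s) * (-1) ^ v * real (Stirling s v) * real (falling_fact N v)
      * (real N - real v) ^ (t - s) * (1 - real v / real N) ^ A" for v s
  have scale: "(real N - real v) ^ A / real N ^ A = (1 - real v / real N) ^ A" for v
  proof -
    have "1 - real v / real N = (real N - real v) / real N"
      using assms by (simp add: field_simps)
    then show ?thesis by (simp add: power_divide)
  qed
  have "(\<Sum>k = 0..N. real k ^ t * (real (falling_fact N k) / real N ^ A) * real (Stirling A k))
      = (\<Sum>k\<le>N. real k ^ t * falling_factorial (real N) k * real (Stirling A k)) / real N ^ A"
    by (simp add: atLeast0AtMost sum_divide_distrib of_nat_falling_fact)
  also have "\<dots> = (\<Sum>v\<le>t. \<Sum>s\<le>t. G v s)"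
    unfolding sum_power_falling_factorial_Stirling sum_divide_distrib
    by (rule sum.cong) (auto simp: G_def Stirling_binomial_poly_def of_nat_falling_fact
        sum_distrib_left sum_divide_distrib scale[symmetric] algebra_simps)
  also have "\<dots> = (\<Sum>v\<le>t. \<Sum>s\<in>{v..t}. G v s)"
    by (intro sum.cong refl sum.mono_neutral_right) (auto simp: G_def)
  also have "\<dots> = (\<Sum>v\<le>t. \<Sum>s\<in>{v..t}. real (t choose (t - s)) * (-1) ^ v
      * real (Stirling (v + (s - v)) v) * real (falling_fact N v)
      * (real N - real v) ^ (t - s) * (1 - real v / real N) ^ A)"
    by (intro sum.cong refl) (simp add: G_def flip: binomial_symmetric)
  also have "\<dots> = (\<Sum>(u, v, w) \<in> {(u, v, w). u + v + w = t}.
             real (t choose u) * (-1) ^ v * real (Stirling (v + w) v) * real (falling_fact N v)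
             * (real N - real v) ^ u * (1 - real v / real N) ^ A)"
    by (rule sum_triples_sum_eq[symmetric])
  finally show ?thesis .
qed

lemma card_insert_eq_count:
  assumes "I \<subseteq> {..<N}"
  shows "card {x \<in> {..<N}. card (insert x I) = k}
       = (if k = card I then card I else 0) + (if k = Suc (card I) then N - card I else 0)"
proof -
  have fin: "finite I" using assms finite_subset by blast
  then have card_insert: "card (insert x I) = (if x \<in> I then card I else Suc (card I))" for x
    by (simp add: insert_absorb)
  consider "k = card I" | "k = Suc (card I)" | "k \<noteq> card I" "k \<noteq> Suc (card I)"
    by blast
  then show ?thesis
  proof cases
    case 1
    then have "{x \<in> {..<N}. card (insert x I) = k} = I" using assms card_insert by auto
    then show ?thesis using 1 by simp
  next
    case 2
    then have "{x \<in> {..<N}. card (insert x I) = k} = {..<N} - I" using card_insert by auto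
    then show ?thesis using 2 assms fin by (simp add: card_Diff_subset)
  next
    case 3
    then have "{x \<in> {..<N}. card (insert x I) = k} = {}" using card_insert by auto
    then show ?thesis using 3 by simp
  qed
qed

definition draws_with_distinct :: "nat \<Rightarrow> nat \<Rightarrow> nat \<Rightarrow> nat" where
  "draws_with_distinct N A k = card {f \<in> {..<A} \<rightarrow>\<^sub>E {..<N}. distinct_count A f = k}"

lemma draws_with_distinct_Suc_eq_sum:
  "draws_with_distinct N (Suc A) k
   = (\<Sum>g \<in> {..<A} \<rightarrow>\<^sub>E {..<N}. card {x \<in> {..<N}. card (insert x (g ` {..<A})) = k})"
proof -
  let ?S = "SIGMA g : {..<A} \<rightarrow>\<^sub>E {..<N}. {x \<in> {..<N}. card (insert x (g ` {..<A})) = k}"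
  let ?T = "{f \<in> {..<Suc A} \<rightarrow>\<^sub>E {..<N}. distinct_count (Suc A) f = k}"
  have image_upd: "(g(A := x)) ` {..<Suc A} = insert x (g ` {..<A})" for g :: "nat \<Rightarrow> nat" and x
    by (auto simp: lessThan_Suc)
  have "bij_betw (\<lambda>(g, x). g(A := x)) ?S ?T"
  proof (rule bij_betw_byWitness[where f' = "\<lambda>f. (f(A := undefined), f A)"])
    show "(\<lambda>(g, x). g(A := x)) ` ?S \<subseteq> ?T"
      using image_upd by (auto simp: distinct_count_def PiE_def Pi_def extensional_def)
    show "(\<lambda>f. (f(A := undefined), f A)) ` ?T \<subseteq> ?S"
      using image_upd[of "f(A := undefined)" "f A" for f]
      by (auto simp: distinct_count_def PiE_def Pi_def extensional_def)
  qed (auto simp: PiE_def extensional_def)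
  then have "draws_with_distinct N (Suc A) k = card ?S"
    unfolding draws_with_distinct_def by (simp add: bij_betw_same_card)
  also have "\<dots> = (\<Sum>g \<in> {..<A} \<rightarrow>\<^sub>E {..<N}. card {x \<in> {..<N}. card (insert x (g ` {..<A})) = k})"
    by (rule card_SigmaI) (auto simp: finite_PiE)
  finally show ?thesis .
qed

lemma draws_with_distinct_Suc:
  "draws_with_distinct N (Suc A) k = k * draws_with_distinct N A k
     + (if k = 0 then 0 else (N - (k - 1)) * draws_with_distinct N A (k - 1))"
proof -
  have "draws_with_distinct N (Suc A) k
      = (\<Sum>g \<in> {..<A} \<rightarrow>\<^sub>E {..<N}. (if distinct_count A g = k then k else 0)
          + (if distinct_count A g = k - 1 \<and> k \<noteq> 0 then N - (k - 1) else 0))"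
    unfolding draws_with_distinct_Suc_eq_sum
  proof (rule sum.cong)
    fix g assume "g \<in> {..<A} \<rightarrow>\<^sub>E {..<N}"
    then have image: "g ` {..<A} \<subseteq> {..<N}" by auto
    show "card {x \<in> {..<N}. card (insert x (g ` {..<A})) = k}
        = (if distinct_count A g = k then k else 0)
          + (if distinct_count A g = k - 1 \<and> k \<noteq> 0 then N - (k - 1) else 0)"
      unfolding card_insert_eq_count[OF image] distinct_count_def by auto
  qed simp
  also have "\<dots> = k * draws_with_distinct N A k
      + (if k = 0 then 0 else (N - (k - 1)) * draws_with_distinct N A (k - 1))"
    unfolding sum.distrib draws_with_distinct_def
    by (cases "k = 0") (simp_all add: sum.inter_filter[symmetric] finite_PiE)
  finally show ?thesis .
qed

lemma draws_with_distinct_eq: "draws_with_distinct N A k = falling_fact N k * Stirling A k"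
proof (induction A arbitrary: k)
  case 0
  have "{..<0::nat} \<rightarrow>\<^sub>E {..<N} = {\<lambda>_. undefined}" by simp
  then show ?case
    by (cases k) (auto simp: draws_with_distinct_def distinct_count_def falling_fact_def)
next
  case (Suc A)
  show ?case
  proof (cases k)
    case (Suc j)
    then have "draws_with_distinct N (Suc A) k
        = Suc j * (falling_fact N j * (N - j) * Stirling A (Suc j)) + (N - j) * (falling_fact N j * Stirling A j)"
      by (simp add: draws_with_distinct_Suc Suc.IH falling_fact_Suc)
    also have "\<dots> = falling_fact N j * (N - j) * (Suc j * Stirling A (Suc j) + Stirling A j)"
      by (simp only: distrib_left ac_simps)
    finally show ?thesis
      using Suc by (simp add: falling_fact_Suc)
  qed (simp add: draws_with_distinct_Suc)
qed

lemma PiE_lessThan_nonempty: "N \<ge> 1 \<Longrightarrow> {..<A} \<rightarrow>\<^sub>E {..<N::nat} \<noteq> {}"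
  by (simp add: PiE_eq_empty_iff lessThan_empty_iff)

lemma prob_distinct_count:
  assumes "N \<ge> 1"
  shows "measure_pmf.prob (draws_pmf N A) {f. distinct_count A f = k}
         = real (falling_fact N k) / real N ^ A * real (Stirling A k)"
proof -
  have "({..<A} \<rightarrow>\<^sub>E {..<N}) \<inter> {f. distinct_count A f = k}
      = {f \<in> {..<A} \<rightarrow>\<^sub>E {..<N}. distinct_count A f = k}"
    by blast
  then show ?thesis
    using assms
    by (simp add: draws_pmf_def measure_pmf_of_set PiE_lessThan_nonempty finite_PiE card_PiE
        flip: draws_with_distinct_def) (simp add: draws_with_distinct_eq)
qed

lemma expectation_distinct_count:
  fixes h :: "nat \<Rightarrow> real"
  assumes "N \<ge> 1"
  shows "measure_pmf.expectation (draws_pmf N A) (\<lambda>f. h (distinct_count A f))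
         = (\<Sum>k = 0..N. h k * measure_pmf.prob (draws_pmf N A) {f. distinct_count A f = k})"
proof -
  have "set_pmf (map_pmf (distinct_count A) (draws_pmf N A)) \<subseteq> {0..N}"
  proof
    fix k assume "k \<in> set_pmf (map_pmf (distinct_count A) (draws_pmf N A))"
    then obtain f where f: "f \<in> {..<A} \<rightarrow>\<^sub>E {..<N}" and k: "k = card (f ` {..<A})"
      using assms by (auto simp: draws_pmf_def PiE_lessThan_nonempty finite_PiE distinct_count_def)
    have "card (f ` {..<A}) \<le> card {..<N}"
      using f by (intro card_mono) auto
    then show "k \<in> {0..N}" using k by simp
  qed
  then have "measure_pmf.expectation (map_pmf (distinct_count A) (draws_pmf N A)) h
      = (\<Sum>k = 0..N. h k * pmf (map_pmf (distinct_count A) (draws_pmf N A)) k)"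
    by (intro integral_measure_pmf_real) auto
  then show ?thesis
    by (simp add: pmf_map vimage_def)
qed

theorem mainTheorem1:
  fixes N A t :: nat
  assumes "N \<ge> 1"
  shows "(\<forall>k \<le> N. measure_pmf.prob (draws_pmf N A) {f. distinct_count A f = k}
            = real (falling_fact N k) / real N ^ A * real (Stirling A k))
    \<and> measure_pmf.expectation (draws_pmf N A) (\<lambda>f. real (distinct_count A f) ^ t)
        = (\<Sum>k = 0..N. real k ^ t * (real (falling_fact N k) / real N ^ A) * real (Stirling A k))
    \<and> (\<Sum>k = 0..N. real k ^ t * (real (falling_fact N k) / real N ^ A) * real (Stirling A k))
        = (\<Sum>(u, v, w) \<in> {(u, v, w). u + v + w = t}.
             real (t choose u) * (-1) ^ v * real (Stirling (v + w) v) * real (falling_fact N v)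
             * (real N - real v) ^ u * (1 - real v / real N) ^ A)"
  using prob_distinct_count[OF assms] expectation_distinct_count[OF assms, where h = "\<lambda>k. real k ^ t"]
    sum_Stirling_moment_eq[OF assms]
  by (simp add: mult.assoc)

end
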